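(* Let $A$ be a finite alphabet with $|A|\ge2$. If $Z\subseteq A^+$ is a finite code of standard form and $|Z|$ is a prime number, then $Z$ is not an alt-induced code.
   Context: $A^+$ is the set of non-empty words over $A$; $|S|$ denotes cardinality. A code is a subset of $A^+$ in which every word has at most one factorization into its elements. A finite code $Z$ over $A$ is of standard form if every word of $Z$ has length at least $2$, it is not the case that all words of $Z$ begin with the same letter, and it is not the case that all words of $Z$ end with the same letter. For non-empty $X,Y\subseteq A^+$, $(X,Y)$ is an alternative code if $XY=\{xy:x\in X,y\in Y\}$ is a code and each element of $XY$ has exactly one factorization $xy$ with $x\in X,y\in Y$ (equivalently, no word admits two different similar alternative factorizations on $(X,Y)$). $Z$ is an alt-induced code if $Z=XY$ for some alternative code $(X,Y)$. *)

theory Defs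
  imports Main "HOL-Computational_Algebra.Primes"
begin

definition words_plus :: "'a set \<Rightarrow> 'a list set" where
  "words_plus A = {w. w \<noteq> [] \<and> set w \<subseteq> A}"

definition is_code :: "'a set \<Rightarrow> 'a list set \<Rightarrow> bool" where
  "is_code A Z \<longleftrightarrow> Z \<subseteq> words_plus A \<and>
     (\<forall>xs ys. set xs \<subseteq> Z \<longrightarrow> set ys \<subseteq> Z \<longrightarrow> concat xs = concat ys \<longrightarrow> xs = ys)"

definition standard_form :: "'a list set \<Rightarrow> bool" where
  "standard_form Z \<longleftrightarrow> finite Z \<and> (\<forall>z\<in>Z. 2 \<le> length z) \<and>
     \<not> (\<exists>a. \<forall>z\<in>Z. hd z = a) \<and> \<not> (\<exists>a. \<forall>z\<in>Z. last z = a)"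

definition set_concat :: "'a list set \<Rightarrow> 'a list set \<Rightarrow> 'a list set" where
  "set_concat X Y = {x @ y | x y. x \<in> X \<and> y \<in> Y}"

definition alternative_code :: "'a set \<Rightarrow> 'a list set \<Rightarrow> 'a list set \<Rightarrow> bool" where
  "alternative_code A X Y \<longleftrightarrow> X \<noteq> {} \<and> Y \<noteq> {} \<and>
     X \<subseteq> words_plus A \<and> Y \<subseteq> words_plus A \<and>
     is_code A (set_concat X Y) \<and>
     (\<forall>x\<in>X. \<forall>x'\<in>X. \<forall>y\<in>Y. \<forall>y'\<in>Y. x @ y = x' @ y' \<longrightarrow> x = x' \<and> y = y')"

definition alt_induced_code :: "'a set \<Rightarrow> 'a list set \<Rightarrow> bool" where
  "alt_induced_code A Z \<longleftrightarrow> (\<exists>X Y. alternative_code A X Y \<and> Z = set_concat X Y)"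

end

theory Submission
  imports Defs
begin

text \<open>If every word of XY factors uniquely, concatenation is a bijection X \<times> Y \<rightarrow> XY, so
  |XY| = |X| |Y|. A prime cardinality forces X or Y to be a single non-empty word, and then
  every word of XY begins (resp. ends) with the same letter, contradicting standard form.\<close>

lemma card_set_concat:
  assumes "\<And>x x' y y'. x \<in> X \<Longrightarrow> x' \<in> X \<Longrightarrow> y \<in> Y \<Longrightarrow> y' \<in> Y \<Longrightarrow> x @ y = x' @ y' \<Longrightarrow> x = x' \<and> y = y'"
  shows "card (set_concat X Y) = card X * card Y"
proof -
  have "inj_on (\<lambda>(x, y). x @ y) (X \<times> Y)"
    using assms by (auto simp: inj_on_def)
  moreover have "(\<lambda>(x, y). x @ y) ` (X \<times> Y) = set_concat X Y"
    unfolding set_concat_def by auto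
  ultimately show ?thesis
    by (metis card_image card_cartesian_product)
qed

lemma hd_set_concat_singleton:
  assumes "x \<noteq> []" and "z \<in> set_concat {x} Y"
  shows "hd z = hd x"
  using assms unfolding set_concat_def by auto

lemma last_set_concat_singleton:
  assumes "y \<noteq> []" and "z \<in> set_concat X {y}"
  shows "last z = last y"
  using assms unfolding set_concat_def by auto

theorem corollaryC:
  fixes A :: "'a set" and Z :: "'a list set"
  assumes "finite A" and "card A \<ge> 2"
    and "Z \<subseteq> words_plus A" and "finite Z" and "is_code A Z" and "standard_form Z"
    and "prime (card Z)"
  shows "\<not> alt_induced_code A Z"
proof
  assume "alt_induced_code A Z"
  then obtain X Y where alt: "alternative_code A X Y" and Z: "Z = set_concat X Y"
    unfolding alt_induced_code_def by blast
  then have "card Z = card X * card Y"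
    using card_set_concat unfolding alternative_code_def by metis
  then have "card X = 1 \<or> card Y = 1"
    using \<open>prime (card Z)\<close> prime_product by metis
  then show False
  proof
    assume "card X = 1"
    then obtain x where "X = {x}" by (rule card_1_singletonE)
    moreover have "x \<noteq> []" using alt \<open>X = {x}\<close> unfolding alternative_code_def words_plus_def by auto
    ultimately have "\<forall>z\<in>Z. hd z = hd x" using Z hd_set_concat_singleton by blast
    then show False using \<open>standard_form Z\<close> unfolding standard_form_def by blast
  next
    assume "card Y = 1"
    then obtain y where "Y = {y}" by (rule card_1_singletonE)
    moreover have "y \<noteq> []" using alt \<open>Y = {y}\<close> unfolding alternative_code_def words_plus_def by auto
    ultimately have "\<forall>z\<in>Z. last z = last y" using Z last_set_concat_singleton by blast
    then show False using \<open>standard_form Z\<close> unfolding standard_form_def by blast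
  qed
qed

end
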